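(* Let $T$ be a tabloid whose $k$-th and $(k+1)$-st rows have the same size $m$. Then $\operatorname{lch}^o_k(T)=\operatorname{lch}_k(T)$ for every activation ordering $o$.
   Context: Fix $n\ge1$; $\overline i=i+n\mathbb Z$, $[\overline n]=\{\overline1,\dots,\overline n\}$. A tabloid is a sequence of pairwise disjoint subsets (rows) $T_1,T_2,\dots$ of $[\overline n]$. Broken order: $\overline1<\overline2<\dots<\overline n$. An activation ordering for rows $k,k+1$ is a bijection $o:[m]\to T_k$. The charge matching with ordering $o$: for $t=1,\dots,m$ in turn, match $o(t)$ with the smallest (broken order) not yet matched element of $T_{k+1}$ that is larger than $o(t)$, if one exists; otherwise with the smallest not yet matched element of $T_{k+1}$. $\operatorname{lch}^o_k(T)$ is the number of elements $\overline a\in T_k$ matched with some $\overline b$ satisfying $\overline a>\overline b$ (broken order). $\operatorname{lch}_k(T)$ denotes $\operatorname{lch}^{o}_k(T)$ for the standard ordering $o$, which lists $T_k$ in increasing broken order. *)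

theory Defs
  imports Main
begin

text \<open>Residues \<open>i + nZ\<close> in [n] are represented by the naturals 1..n; the broken order
  1 < 2 < ... < n is then the usual order on nat.\<close>

definition tabloid :: "nat \<Rightarrow> (nat \<Rightarrow> nat set) \<Rightarrow> bool" where
  "tabloid n T \<longleftrightarrow> (\<forall>i\<ge>1. T i \<subseteq> {1..n}) \<and>
     (\<forall>i\<ge>1. \<forall>j\<ge>1. i \<noteq> j \<longrightarrow> T i \<inter> T j = {})"

text \<open>Charge matching: process the elements of row k in the given order; B is the set
  of not yet matched elements of row k+1. Returns the number of elements a matched with
  some b with a > b.\<close>

fun charge_count :: "nat list \<Rightarrow> nat set \<Rightarrow> nat" where
  "charge_count [] B = 0"
| "charge_count (a # as) B =
     (if {b \<in> B. a < b} \<noteq> {} then charge_count as (B - {Min {b \<in> B. a < b}})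
      else if B \<noteq> {} then (if Min B < a then 1 else 0) + charge_count as (B - {Min B})
      else charge_count as B)"

definition activation_ordering :: "(nat \<Rightarrow> nat set) \<Rightarrow> nat \<Rightarrow> (nat \<Rightarrow> nat) \<Rightarrow> bool" where
  "activation_ordering T k act \<longleftrightarrow> bij_betw act {1..card (T k)} (T k)"

definition lch_ord :: "(nat \<Rightarrow> nat set) \<Rightarrow> nat \<Rightarrow> (nat \<Rightarrow> nat) \<Rightarrow> nat" where
  "lch_ord T k act = charge_count (map act [1..<card (T k) + 1]) (T (Suc k))"

definition lch :: "(nat \<Rightarrow> nat set) \<Rightarrow> nat \<Rightarrow> nat" where
  "lch T k = charge_count (sorted_list_of_set (T k)) (T (Suc k))"

end

theory Submission
  imports Defs
begin

text \<open>Let \<open>A\<close> be the set of elements still to be activated and \<open>B\<close> the set of unmatched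
  elements of the next row, with \<open>|A| = |B|\<close>. The charge count equals the largest value of
  \<open>|B \<inter> [0,x)| - |A \<inter> [0,x)|\<close> over all cut points \<open>x\<close>, a quantity that only depends on the
  sets and not on the activation order. Indeed, activating \<open>a\<close> and matching it upwards with the
  next free \<open>b > a\<close> leaves this maximum unchanged, while a wrap-around match (every free
  element lies below \<open>a\<close>) lowers it by exactly one.\<close>

definition excess :: "nat set \<Rightarrow> nat set \<Rightarrow> nat \<Rightarrow> int" where
  "excess A B x = int (card (B \<inter> {..<x})) - int (card (A \<inter> {..<x}))"

lemma excess_insert_remove:
  assumes "finite A" "a \<notin> A" "finite B" "b \<in> B"
  shows "excess A (B - {b}) x = excess (insert a A) B x + of_bool (a < x) - of_bool (b < x)"
proof -
  have "card ((B - {b}) \<inter> {..<x}) + of_bool (b < x) = card (B \<inter> {..<x})"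
  proof -
    have "(B - {b}) \<inter> {..<x} = B \<inter> {..<x} - {b}" by blast
    then show ?thesis
      using assms(3,4) card_Suc_Diff1[of "B \<inter> {..<x}" b]
      by (cases "b < x") (simp_all del: card_Diff_insert)
  qed
  moreover have "card (insert a A \<inter> {..<x}) = card (A \<inter> {..<x}) + of_bool (a < x)"
    using assms(1,2) by (simp add: Int_insert_left)
  ultimately show ?thesis
    unfolding excess_def by (cases "a < x"; cases "b < x") simp_all
qed

lemma excess_add_one_le_before:
  assumes "finite A" "a \<in> A" "a < x" "\<And>c. c \<in> B \<Longrightarrow> c < x \<Longrightarrow> c < a"
  shows "excess A B x + 1 \<le> excess A B a"
proof -
  have "B \<inter> {..<x} = B \<inter> {..<a}"
    using assms(3,4) by auto
  moreover have "card (insert a (A \<inter> {..<a})) \<le> card (A \<inter> {..<x})"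
    using assms by (intro card_mono) auto
  ultimately show ?thesis
    using assms(1) by (simp add: excess_def)
qed

lemma Max_excess_match_above:
  assumes "finite A" "a \<notin> A" "finite B" "a \<notin> B" "b \<in> B" "a < b"
    and b_least: "\<And>c. c \<in> B \<Longrightarrow> a < c \<Longrightarrow> b \<le> c"
    and "a \<le> K"
  shows "Max (excess A (B - {b}) ` {..K}) = Max (excess (insert a A) B ` {..K})"
proof -
  define f where "f = excess A (B - {b})"
  define g where "g = excess (insert a A) B"
  have f_eq: "f x = g x + of_bool (a < x) - of_bool (b < x)" for x
    unfolding f_def g_def using excess_insert_remove assms(1,2,3,5) by blast
  have f_le: "f x \<le> g x \<or> f x \<le> g a" for x
  proof (cases "a < x \<and> \<not> b < x")
    case True
    have "c < a" if "c \<in> B" "c < x" for c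
    proof (rule ccontr)
      assume "\<not> c < a"
      with that(1) assms(4) have "a < c" by (cases "c = a") auto
      with b_least that True show False by fastforce
    qed
    then have "g x + 1 \<le> g a"
      unfolding g_def using True assms(1) by (intro excess_add_one_le_before) auto
    then show ?thesis using f_eq[of x] True by simp
  qed (use f_eq in auto)
  have g_le_Max: "g x \<le> Max (g ` {..K})" if "x \<le> K" for x
    using that by (intro Max_ge) auto
  have "f x \<le> Max (g ` {..K})" if "x \<le> K" for x
    using f_le[of x] g_le_Max[OF that] g_le_Max[OF \<open>a \<le> K\<close>] by linarith
  moreover have "g x \<le> Max (f ` {..K})" if "x \<le> K" for x
  proof -
    have "f x \<le> Max (f ` {..K})"
      using that by (intro Max_ge) auto
    then show ?thesis using f_eq[of x] \<open>a < b\<close> by (cases "a < x"; cases "b < x") auto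
  qed
  ultimately show ?thesis
    unfolding f_def[symmetric] g_def[symmetric]
    by (intro order.antisym Max.boundedI) auto
qed

lemma Max_excess_match_wrap:
  assumes "finite A" "a \<notin> A" "finite B" "b \<in> B"
    and below_a: "\<And>c. c \<in> B \<Longrightarrow> c < a" and b_least: "\<And>c. c \<in> B \<Longrightarrow> b \<le> c"
    and "card (insert a A) = card B" "a \<le> K"
  shows "Max (excess A (B - {b}) ` {..K}) = Max (excess (insert a A) B ` {..K}) - 1"
proof -
  define f where "f = excess A (B - {b})"
  define g where "g = excess (insert a A) B"
  define M where "M = Max (g ` {..K})"
  have f_eq: "f x = g x + of_bool (a < x) - of_bool (b < x)" for x
    unfolding f_def g_def using excess_insert_remove assms(1-4) by blast
  have g_le_M: "g x \<le> M" if "x \<le> K" for x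
    unfolding M_def using that by auto
  have outside: "g x + 1 \<le> g a" if "x \<le> b \<or> a < x" for x
    using that
  proof
    assume "x \<le> b"
    then have "B \<inter> {..<x} = {}"
      using b_least by fastforce
    moreover have "card (insert a A \<inter> {..<a}) \<le> card A"
      using assms(1) by (intro card_mono) auto
    moreover have "B \<inter> {..<a} = B"
      using below_a by auto
    ultimately show ?thesis
      using assms(1,2,7) unfolding g_def excess_def by simp
  next
    assume "a < x"
    then show ?thesis
      unfolding g_def using below_a assms(1) by (intro excess_add_one_le_before) auto
  qed
  have "b < a" using below_a assms(4) .
  have "f x \<le> M - 1" if "x \<le> K" for x
  proof (cases "b < x \<and> x \<le> a")
    case True
    then show ?thesis using f_eq[of x] g_le_M[OF that] by simp
  next
    case False
    then have "f x = g x" and "g x + 1 \<le> g a"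
      using f_eq[of x] outside[of x] \<open>b < a\<close> by auto
    then show ?thesis using g_le_M[OF \<open>a \<le> K\<close>] by simp
  qed
  moreover have "M \<in> g ` {..K}"
    unfolding M_def by (intro Max_in) auto
  then obtain x0 where "x0 \<le> K" "g x0 = M"
    by auto
  moreover from this have "b < x0 \<and> x0 \<le> a"
    using outside[of x0] g_le_M[OF \<open>a \<le> K\<close>] by fastforce
  then have "M - 1 \<in> f ` {..K}"
    using f_eq[of x0] \<open>x0 \<le> K\<close> \<open>g x0 = M\<close> by (intro rev_image_eqI[of x0]) auto
  ultimately show ?thesis
    unfolding f_def[symmetric] g_def[symmetric] M_def[symmetric]
    by (intro Max_eqI) auto
qed

lemma charge_count_eq_Max_excess:
  assumes "distinct as" "finite B" "length as = card B" "set as \<inter> B = {}"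
    and "\<forall>y \<in> set as \<union> B. y \<le> K"
  shows "int (charge_count as B) = Max (excess (set as) B ` {..K})"
  using assms
proof (induction as arbitrary: B)
  case Nil
  then have "B = {}" by simp
  then show ?case by (simp add: excess_def)
next
  case (Cons a as)
  have IH: "int (charge_count as (B - {b})) = Max (excess (set as) (B - {b}) ` {..K})"
    if "b \<in> B" for b
    using Cons.prems that by (intro Cons.IH) auto
  have "a \<notin> set as" "a \<notin> B" "a \<le> K"
    using Cons.prems by auto
  show ?case
  proof (cases "{c \<in> B. a < c} = {}")
    case False
    define b where "b = Min {c \<in> B. a < c}"
    have "b \<in> {c \<in> B. a < c}"
      unfolding b_def using False Cons.prems(2) by (intro Min_in) auto
    moreover have "b \<le> c" if "c \<in> B" "a < c" for c
      unfolding b_def using that Cons.prems(2) by (intro Min_le) auto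
    ultimately show ?thesis
      using False IH[of b] Max_excess_match_above[of "set as" a B b K] Cons.prems(2)
        \<open>a \<notin> set as\<close> \<open>a \<notin> B\<close> \<open>a \<le> K\<close> by (simp add: b_def)
  next
    case True
    with \<open>a \<notin> B\<close> have below_a: "c < a" if "c \<in> B" for c
      using that by (metis (mono_tags, lifting) empty_iff linorder_neqE_nat mem_Collect_eq)
    have "B \<noteq> {}"
      using Cons.prems(3) by auto
    define b where "b = Min B"
    have "b \<in> B" "\<And>c. c \<in> B \<Longrightarrow> b \<le> c"
      unfolding b_def using \<open>B \<noteq> {}\<close> Cons.prems(2) by auto
    moreover have "card (insert a (set as)) = card B"
      using Cons.prems(1,3) by (simp add: distinct_card)
    ultimately show ?thesis
      using True IH[of b] Max_excess_match_wrap[of "set as" a B b K]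
        \<open>B \<noteq> {}\<close> Cons.prems(2) \<open>a \<notin> set as\<close> \<open>a \<le> K\<close> below_a
      by (simp add: b_def)
  qed
qed

lemma charge_count_order_independent:
  assumes "distinct as" "distinct bs" "set as = set bs"
    and "finite B" "length as = card B" "set as \<inter> B = {}"
  shows "charge_count as B = charge_count bs B"
proof -
  define K where "K = Max (insert 0 (set as \<union> B))"
  have "\<forall>y \<in> set as \<union> B. y \<le> K"
    unfolding K_def using assms(4) by auto
  moreover have "length bs = card B"
    using assms(1-3,5) by (metis distinct_card)
  ultimately have "int (charge_count as B) = int (charge_count bs B)"
    using assms by (simp add: charge_count_eq_Max_excess)
  then show ?thesis by simp
qed

theorem lemma5p5:
  fixes n k m :: nat and T :: "nat \<Rightarrow> nat set" and act :: "nat \<Rightarrow> nat"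
  assumes "n \<ge> 1" and "tabloid n T" and "k \<ge> 1"
    and "card (T k) = m" and "card (T (Suc k)) = m"
    and "activation_ordering T k act"
  shows "lch_ord T k act = lch T k"
proof -
  have rows: "T k \<subseteq> {1..n}" "T (Suc k) \<subseteq> {1..n}" "T k \<inter> T (Suc k) = {}"
    using assms(2,3) unfolding tabloid_def by auto
  then have "finite (T k)" "finite (T (Suc k))"
    by (auto intro: finite_subset)
  have "bij_betw act {1..m} (T k)"
    using assms(4,6) unfolding activation_ordering_def by simp
  moreover have "set [1..<m + 1] = {1..m}" by auto
  ultimately have "distinct (map act [1..<m + 1])" "set (map act [1..<m + 1]) = T k"
    by (auto simp: bij_betw_def distinct_map)
  then have "charge_count (map act [1..<m + 1]) (T (Suc k))
      = charge_count (sorted_list_of_set (T k)) (T (Suc k))"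
    using rows \<open>finite (T k)\<close> \<open>finite (T (Suc k))\<close> assms(4,5)
    by (intro charge_count_order_independent) auto
  then show ?thesis
    unfolding lch_ord_def lch_def using assms(4) by simp
qed

end
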